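(* Let $\mathbf b_i\in\mathcal B_k$ be a boundary point of $P(A)$. Let $\beta_1,\dots,\beta_{R_k+1}$ be the elements of $\{1/\ell_0,2/\ell_0,\dots,\ell_0/\ell_0\}$ not of the form $1-s_0^{(j)}/\ell_0$ with $\mathbf b_j\in\mathcal B_k$ a boundary point of $P(A)$ and $\mathbf b_j\neq\mathbf b_i$ (one may take $\beta_1=1$), and let $\alpha_1,\dots,\alpha_{R_k+1}$ be the elements remaining on the list $\frac{v^{(i)}_r+\sigma}{\ell_r}$ ($r=1,\dots,m$, $\sigma=0,\dots,\ell_r-1$) after one copy of each element $1-s_0^{(j)}/\ell_0$ with $\mathbf b_j\in\mathcal B_k$ a boundary point of $P(A)$, $\mathbf b_j\ne\mathbf b_i$, has been removed. Then the $R_k+1$ series $F^{(\mathbf b_j)}_{\mathbf b_i}(\lambda)$ with $\mathbf b_j\in\mathcal B_k$ either an interior point of $P(A)$ or equal to $\mathbf b_i$ are obtained from a full set of solutions at $x=0$ of the hypergeometric operator \[(\delta_x+\beta_1-1)\cdots(\delta_x+\beta_{R_k+1}-1)-x(\delta_x+\alpha_1)\cdots(\delta_x+\alpha_{R_k+1}),\qquad\delta_x=x\tfrac{d}{dx},\] by replacing $x$ by $\lambda^{\ell_0}$; that is, $F^{(\mathbf b_j)}_{\mathbf b_i}(\lambda)=H_j(\lambda^{\ell_0})$ where the $H_j(x)$ (formal series in $x^{s_0^{(j)}/\ell_0}\mathbb C[[x]]$) form a full set of solutions of this operator at $x=0$.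
   Context: Let $A=\{\mathbf a_1,\dots,\mathbf a_m\}\subseteq\mathbb Z^n$ be linearly independent over $\mathbb R$, $\mathbf a_0\in\mathbb Z^n$, and $\ell_0,\dots,\ell_m$ positive integers with gcd $1$, $\ell_0\mathbf a_0=\sum_{j=1}^m\ell_j\mathbf a_j$, $\ell_0=\sum_{j=1}^m\ell_j$. Let $\mathbb ZA$, $\mathbb ZA_+$ be the groups generated by $A$ and $A\cup\{\mathbf a_0\}$. Let $V$ be the real span of $A$, $V_{\mathbb Z}=V\cap\mathbb Z^n$, $P(A)=\{\sum_jc_j\mathbf a_j:0\le c_j<1\}$, $\mathcal B=V_{\mathbb Z}\cap P(A)$. Each $\mathbf b\in\mathcal B$ is written uniquely $\mathbf b=\sum_rv_r\mathbf a_r$ with $v_r\in[0,1)$; $\mathbf b$ is an interior point of $P(A)$ if all $v_r>0$ and a boundary point otherwise. Fix a coset $\mathcal C_k$ of $\mathbb ZA_+$ in $V_{\mathbb Z}$, put $\mathcal B_k=\mathcal B\cap\mathcal C_k$ (it has $\ell_0$ elements), and let $R_k$ be the number of interior points of $P(A)$ in $\mathcal B_k$. Fix $\mathbf b_i\in\mathcal B_k$. For $\mathbf b_j\in\mathcal B_k$ write $\mathbf b_j=\sum_rv^{(j)}_r\mathbf a_r$, let $s_0^{(j)}\in\{0,\dots,\ell_0-1\}$ be the unique element with $\mathbf b_i+s_0^{(j)}\mathbf a_0\equiv\mathbf b_j\pmod{\mathbb ZA}$, and let $s^{(j)}_r\in\mathbb Z$ ($r=1,\dots,m$) be determined by $\mathbf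 b_i+s_0^{(j)}\mathbf a_0=\mathbf b_j-\sum_rs^{(j)}_r\mathbf a_r$. Define \[F^{(\mathbf b_j)}_{\mathbf b_i}(\lambda)=\lambda^{s_0^{(j)}}\sum_{s=0}^\infty\frac{\prod_{r=1}^m\prod_{\sigma=0}^{\ell_r-1}\big(\frac{v^{(j)}_r-s^{(j)}_r+\sigma}{\ell_r}\big)_s}{\prod_{t=1}^{\ell_0}\big(\frac{s^{(j)}_0+t}{\ell_0}\big)_s}\lambda^{s\ell_0},\] with $(a)_s=a(a+1)\cdots(a+s-1)$. *)

theory Defs
  imports "HOL-Analysis.Analysis" "HOL-Computational_Algebra.Formal_Power_Series"
    "HOL-Library.Multiset"
begin

text \<open>Integer points of R^n are represented as real vectors with integer coordinates.
  The family A is a 1..m, and a 0 is the extra vector a_0; l j are the weights.\<close>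

definition intvec :: "real^'n \<Rightarrow> bool" where
  "intvec x \<longleftrightarrow> (\<forall>i. x $ i \<in> \<int>)"

definition ZA :: "(nat \<Rightarrow> real^'n) \<Rightarrow> nat \<Rightarrow> (real^'n) set" where
  "ZA a m = {(\<Sum>j\<in>{1..m}. of_int (c j) *\<^sub>R a j) | c. True}"

definition ZAplus :: "(nat \<Rightarrow> real^'n) \<Rightarrow> nat \<Rightarrow> (real^'n) set" where
  "ZAplus a m = {(\<Sum>j\<in>{0..m}. of_int (c j) *\<^sub>R a j) | c. True}"

definition VZ :: "(nat \<Rightarrow> real^'n) \<Rightarrow> nat \<Rightarrow> (real^'n) set" where
  "VZ a m = {x. x \<in> span (a ` {1..m}) \<and> intvec x}"

definition coord :: "(nat \<Rightarrow> real^'n) \<Rightarrow> nat \<Rightarrow> real^'n \<Rightarrow> nat \<Rightarrow> real" where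
  "coord a m x = (THE c. (\<forall>j. j \<notin> {1..m} \<longrightarrow> c j = 0) \<and>
                          x = (\<Sum>j\<in>{1..m}. c j *\<^sub>R a j))"

definition Bset :: "(nat \<Rightarrow> real^'n) \<Rightarrow> nat \<Rightarrow> (real^'n) set" where
  "Bset a m = {x \<in> VZ a m. \<exists>c. (\<forall>j\<in>{1..m}. 0 \<le> c j \<and> c j < 1) \<and>
                                  x = (\<Sum>j\<in>{1..m}. c j *\<^sub>R a j)}"

definition interior_pt :: "(nat \<Rightarrow> real^'n) \<Rightarrow> nat \<Rightarrow> real^'n \<Rightarrow> bool" where
  "interior_pt a m x \<longleftrightarrow> (\<forall>r\<in>{1..m}. coord a m x r > 0)"

definition s0 :: "(nat \<Rightarrow> real^'n) \<Rightarrow> nat \<Rightarrow> (nat \<Rightarrow> nat) \<Rightarrow> real^'n \<Rightarrow> real^'n \<Rightarrow> nat" where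
  "s0 a m l bi bj = (THE s. s < l 0 \<and> bi + real s *\<^sub>R a 0 - bj \<in> ZA a m)"

text \<open>s_r^{(j)} (integer valued, stored as a real):
  b_i + s_0 a_0 = b_j - \<Sum>_r s_r a_r.\<close>
definition sr :: "(nat \<Rightarrow> real^'n) \<Rightarrow> nat \<Rightarrow> (nat \<Rightarrow> nat) \<Rightarrow> real^'n \<Rightarrow> real^'n \<Rightarrow> nat \<Rightarrow> real" where
  "sr a m l bi bj = coord a m (bj - bi - real (s0 a m l bi bj) *\<^sub>R a 0)"

definition Fc :: "(nat \<Rightarrow> real^'n) \<Rightarrow> nat \<Rightarrow> (nat \<Rightarrow> nat) \<Rightarrow> real^'n \<Rightarrow> real^'n \<Rightarrow> nat \<Rightarrow> real" where
  "Fc a m l bi bj s =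
     (\<Prod>r\<in>{1..m}. \<Prod>\<sigma><l r.
        pochhammer ((coord a m bj r - sr a m l bi bj r + real \<sigma>) / real (l r)) s)
     / (\<Prod>t\<in>{1..l 0}. pochhammer ((real (s0 a m l bi bj) + real t) / real (l 0)) s)"

text \<open>F^{(b_j)}_{b_i}(\<lambda>) = \<lambda>^{s_0} \<Sum>_s Fc s \<lambda>^{s l_0}, as a formal power series in \<lambda>.\<close>
definition Fser :: "(nat \<Rightarrow> real^'n) \<Rightarrow> nat \<Rightarrow> (nat \<Rightarrow> nat) \<Rightarrow> real^'n \<Rightarrow> real^'n \<Rightarrow> complex fps" where
  "Fser a m l bi bj = Abs_fps (\<lambda>n. let e = s0 a m l bi bj in
      if e \<le> n \<and> l 0 dvd (n - e) then complex_of_real (Fc a m l bi bj ((n - e) div l 0)) else 0)"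

text \<open>Generalised formal series x^e g(x) with g a formal power series are represented by
  pairs (e, g).  Coefficient of x^(e+s) of
  L = (\<delta>+\<beta>_1-1)...(\<delta>+\<beta>_N-1) - x (\<delta>+\<alpha>_1)...(\<delta>+\<alpha>_N) applied to x^e g(x).\<close>
definition hyp_apply :: "real multiset \<Rightarrow> real multiset \<Rightarrow> real \<Rightarrow> complex fps \<Rightarrow> nat \<Rightarrow> complex" where
  "hyp_apply bs as e g s =
     (\<Prod>\<beta>\<in>#bs. complex_of_real (e + real s + \<beta> - 1)) * fps_nth g s
     - (if s = 0 then 0
        else (\<Prod>\<alpha>\<in>#as. complex_of_real (e + real (s - 1) + \<alpha>)) * fps_nth g (s - 1))"

definition hyp_solution :: "real multiset \<Rightarrow> real multiset \<Rightarrow> real \<Rightarrow> complex fps \<Rightarrow> bool" where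
  "hyp_solution bs as e g \<longleftrightarrow> (\<forall>s. hyp_apply bs as e g s = 0)"

definition gser_coeff :: "real \<Rightarrow> complex fps \<Rightarrow> real \<Rightarrow> complex" where
  "gser_coeff e g t = (if t - e \<in> \<nat> then fps_nth g (nat \<lfloor>t - e\<rfloor>) else 0)"

definition full_solution_set ::
  "real multiset \<Rightarrow> real multiset \<Rightarrow> 'i set \<Rightarrow> ('i \<Rightarrow> real) \<Rightarrow> ('i \<Rightarrow> complex fps) \<Rightarrow> bool" where
  "full_solution_set bs as J e g \<longleftrightarrow>
     finite J \<and> card J = size bs \<and>
     (\<forall>j\<in>J. hyp_solution bs as (e j) (g j)) \<and>
     (\<forall>c :: 'i \<Rightarrow> complex. (\<forall>t. (\<Sum>j\<in>J. c j * gser_coeff (e j) (g j) t) = 0)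
                             \<longrightarrow> (\<forall>j\<in>J. c j = 0))"

end

theory Submission
  imports Defs
begin

text \<open>The shift b \<mapsto> s0 b is a bijection from B_k onto {0..<l_0}:
  it is well defined because gcd(l_0,...,l_m) = 1 forces l_0 dvd k whenever
  k a_0 \<in> ZA; it is injective because two points of B_k with the same shift
  differ by an element of ZA whose coordinates lie in (-1,1); and it is
  surjective because reducing the coordinates of b_i + s a_0 modulo 1 stays in the coset.

  With e = s0 b / l_0, the coefficients of F^(b) are ratios of Pochhammer
  products whose upper parameters are the list alist shifted by e and whose
  lower parameters are the fractions k/l_0 shifted by e.  A boundary point
  b_j \<noteq> b_i has a vanishing coordinate, and this exhibits 1 - s0 b_j / l_0 as
  an entry of alist.  Cancelling these common parameters turns the ratio into the
  first-order recurrence of the hypergeometric operator, whose indicial factor vanishes because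
  1 - e is one of the \<beta>'s.  The exponents e are distinct numbers
  in [0,1), which makes the solutions linearly independent.\<close>

text \<open>The imported libraries make One_nat_def a simp rule, which would rewrite the index
  range {1..m} to {Suc 0..m} and stop the coordinate lemmas below from matching.\<close>

declare One_nat_def [simp del]

lemma intvec_add: "intvec x \<Longrightarrow> intvec y \<Longrightarrow> intvec (x + y)"
  by (auto simp: intvec_def)

lemma intvec_sum: "(\<And>j. j \<in> S \<Longrightarrow> intvec (f j)) \<Longrightarrow> intvec (\<Sum>j\<in>S. f j)"
  by (induction S rule: infinite_finite_induct) (auto simp: intvec_def)

lemma intvec_scaleR_of_int: "intvec x \<Longrightarrow> intvec (of_int k *\<^sub>R x)"
  by (auto simp: intvec_def)

lemma of_real_prod_mset: "of_real (\<Prod>x\<in>#M. f x) = (\<Prod>x\<in>#M. (of_real (f x) :: 'a :: real_field))"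
  by (induction M) simp_all

lemma prod_mset_image_sum:
  "finite I \<Longrightarrow> (\<Prod>x\<in>#(\<Sum>i\<in>I. M i). g x) = (\<Prod>i\<in>I. \<Prod>x\<in>#M i. g x)"
  by (induction I rule: finite_induct) simp_all

lemma mem_sum_mset_setI: "finite I \<Longrightarrow> i \<in> I \<Longrightarrow> x \<in># M i \<Longrightarrow> x \<in># (\<Sum>i\<in>I. M i)"
  by (induction I rule: finite_induct) auto

text \<open>Parameters in D occur both in the numerator and in the denominator of the Pochhammer
  ratio, so they cancel from the quotient of consecutive coefficients.\<close>

lemma pochhammer_ratio_Suc:
  fixes e :: real and A B D :: "real multiset"
  assumes "D \<subseteq># A" and "D \<subseteq># B" and pos: "\<And>\<beta>. \<beta> \<in># B \<Longrightarrow> 0 < e + \<beta>"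
  shows "(\<Prod>\<beta>\<in>#B - D. e + real s + \<beta>) *
           ((\<Prod>\<alpha>\<in>#A. pochhammer (e + \<alpha>) (Suc s)) / (\<Prod>\<beta>\<in>#B. pochhammer (e + \<beta>) (Suc s)))
       = (\<Prod>\<alpha>\<in>#A - D. e + real s + \<alpha>) *
           ((\<Prod>\<alpha>\<in>#A. pochhammer (e + \<alpha>) s) / (\<Prod>\<beta>\<in>#B. pochhammer (e + \<beta>) s))"
proof -
  define step where "step M = (\<Prod>x\<in>#M. e + real s + x)" for M
  have poch_Suc: "(\<Prod>x\<in>#M. pochhammer (e + x) (Suc s)) = (\<Prod>x\<in>#M. pochhammer (e + x) s) * step M"
    for M
  proof -
    have "(\<lambda>x. pochhammer (e + x) (Suc s)) = (\<lambda>x. pochhammer (e + x) s * (e + real s + x))"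
      by (simp add: fun_eq_iff pochhammer_Suc)
    then show ?thesis unfolding step_def by (simp only: prod_mset.distrib)
  qed
  have step_split: "step M = step (M - D) * step D" if "D \<subseteq># M" for M
  proof -
    have "M = (M - D) + D" using that by simp
    then show ?thesis unfolding step_def by (metis image_mset_union prod_mset.union)
  qed
  have D_in_B: "\<beta> \<in># B" if "\<beta> \<in># D" for \<beta>
    using assms(2) that by (rule mset_subset_eqD)
  have "e + real s + \<beta> \<noteq> 0" "pochhammer (e + \<beta>) s \<noteq> 0" if "\<beta> \<in># B" for \<beta>
    using pos[OF that] pochhammer_pos[OF pos[OF that], of s] by linarith+
  then have "step D \<noteq> 0" "step (B - D) \<noteq> 0" "(\<Prod>\<beta>\<in>#B. pochhammer (e + \<beta>) s) \<noteq> 0"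
    by (auto simp: step_def dest: D_in_B in_diffD)
  moreover have "q * ((x * (y * r)) / (p * (q * r))) = y * (x / p)"
    if "p \<noteq> 0" "q \<noteq> 0" "r \<noteq> 0" for x y p q r :: real
    using that by (simp add: field_simps)
  ultimately show ?thesis
    unfolding poch_Suc step_split[OF assms(1)] step_split[OF assms(2)] step_def[symmetric]
    by blast
qed

lemma hyp_solution_of_recurrence:
  fixes c :: "nat \<Rightarrow> real"
  assumes indicial: "1 - e \<in># bs"
    and recurrence: "\<And>s. (\<Prod>\<beta>\<in>#bs. e + real s + \<beta>) * c (Suc s) = (\<Prod>\<alpha>\<in>#as. e + real s + \<alpha>) * c s"
  shows "hyp_solution bs as e (Abs_fps (\<lambda>s. of_real (c s)))"
  unfolding hyp_solution_def
proof
  fix s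
  show "hyp_apply bs as e (Abs_fps (\<lambda>s. of_real (c s))) s = 0"
  proof (cases s)
    case 0
    have "(0::complex) \<in># image_mset (\<lambda>\<beta>. of_real (e + real 0 + \<beta> - 1)) bs"
      using indicial by (auto intro: image_eqI[where x = "1 - e"])
    then show ?thesis by (simp add: hyp_apply_def 0)
  next
    case (Suc t)
    have shift: "(\<lambda>\<beta>. complex_of_real (e + real (Suc t) + \<beta> - 1)) = (\<lambda>\<beta>. of_real (e + real t + \<beta>))"
      by auto
    have "(\<Prod>\<beta>\<in>#bs. complex_of_real (e + real t + \<beta>)) * of_real (c (Suc t))
        = (\<Prod>\<alpha>\<in>#as. complex_of_real (e + real t + \<alpha>)) * of_real (c t)"
      using arg_cong[OF recurrence[of t], of complex_of_real]
      by (simp only: of_real_mult of_real_prod_mset)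
    then show ?thesis
      unfolding hyp_apply_def Suc shift by simp
  qed
qed

text \<open>Evaluating at the exponent e b isolates the term of b.\<close>

lemma gser_coeff_independent:
  assumes "finite J"
    and exps: "\<And>i j. i \<in> J \<Longrightarrow> j \<in> J \<Longrightarrow> i \<noteq> j \<Longrightarrow> e i - e j \<notin> \<nat>"
    and leading: "\<And>j. j \<in> J \<Longrightarrow> fps_nth (g j) 0 \<noteq> 0"
    and vanish: "\<forall>t. (\<Sum>j\<in>J. c j * gser_coeff (e j) (g j) t) = 0"
  shows "\<forall>j\<in>J. c j = 0"
proof
  fix b assume b: "b \<in> J"
  have "(\<Sum>j\<in>J. c j * gser_coeff (e j) (g j) (e b))
      = c b * gser_coeff (e b) (g b) (e b) + (\<Sum>j\<in>J - {b}. c j * gser_coeff (e j) (g j) (e b))"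
    using assms(1) b by (rule sum.remove)
  also have "(\<Sum>j\<in>J - {b}. c j * gser_coeff (e j) (g j) (e b)) = 0"
    using exps[OF b] by (intro sum.neutral) (auto simp: gser_coeff_def)
  finally have "c b * fps_nth (g b) 0 = 0"
    using vanish by (simp add: gser_coeff_def)
  then show "c b = 0" using leading[OF b] by simp
qed

locale indep_family =
  fixes a :: "nat \<Rightarrow> real^'n" and m :: nat
  assumes A_inj: "inj_on a {1..m}"
    and A_indep: "independent (a ` {1..m})"
begin

abbreviation V :: "(real^'n) set" where "V \<equiv> span (a ` {1..m})"

lemma lincomb_eq_imp_coeff_eq:
  assumes "(\<Sum>j\<in>{1..m}. c j *\<^sub>R a j) = (\<Sum>j\<in>{1..m}. d j *\<^sub>R a j)" and r: "r \<in> {1..m}"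
  shows "c r = d r"
proof -
  define u where "u v = c (inv_into {1..m} a v) - d (inv_into {1..m} a v)" for v
  have "(\<Sum>v\<in>a ` {1..m}. u v *\<^sub>R v) = (\<Sum>j\<in>{1..m}. u (a j) *\<^sub>R a j)"
    by (rule sum.reindex[OF A_inj, unfolded comp_def])
  also have "\<dots> = (\<Sum>j\<in>{1..m}. (c j - d j) *\<^sub>R a j)"
    by (rule sum.cong) (simp_all add: u_def inv_into_f_f[OF A_inj])
  also have "\<dots> = 0"
    using assms(1) by (simp add: scaleR_diff_left sum_subtractf)
  finally have "\<forall>v\<in>a ` {1..m}. u v = 0"
    using A_indep dependent_finite[of "a ` {1..m}"] by (auto simp: scalar_mult_eq_scaleR)
  then show ?thesis using r by (auto simp: u_def inv_into_f_f[OF A_inj])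
qed

lemma coord_lincomb:
  assumes r: "r \<in> {1..m}"
  shows "coord a m (\<Sum>j\<in>{1..m}. c j *\<^sub>R a j) r = c r"
proof -
  define c' where "c' j = (if j \<in> {1..m} then c j else 0)" for j
  have sum_c': "(\<Sum>j\<in>{1..m}. c j *\<^sub>R a j) = (\<Sum>j\<in>{1..m}. c' j *\<^sub>R a j)"
    by (rule sum.cong) (auto simp: c'_def)
  have "coord a m (\<Sum>j\<in>{1..m}. c j *\<^sub>R a j) = c'"
    unfolding coord_def
  proof (rule the_equality)
    fix d
    assume d: "(\<forall>j. j \<notin> {1..m} \<longrightarrow> d j = 0) \<and> (\<Sum>j\<in>{1..m}. c j *\<^sub>R a j) = (\<Sum>j\<in>{1..m}. d j *\<^sub>R a j)"
    show "d = c'"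
    proof
      fix j show "d j = c' j"
      proof (cases "j \<in> {1..m}")
        case True
        then show ?thesis using d sum_c' lincomb_eq_imp_coeff_eq[of d c' j] by simp
      next
        case False
        then show ?thesis using d by (auto simp: c'_def)
      qed
    qed
  qed (use sum_c' in \<open>auto simp: c'_def\<close>)
  then show ?thesis using r by (simp add: c'_def)
qed

lemma lincomb_in_span: "(\<Sum>j\<in>{1..m}. c j *\<^sub>R a j) \<in> V"
  by (intro span_sum span_scale span_base) auto

lemma span_eq_lincomb:
  assumes "x \<in> V"
  obtains c where "x = (\<Sum>j\<in>{1..m}. c j *\<^sub>R a j)"
proof -
  obtain u where "x = (\<Sum>v\<in>a ` {1..m}. u v *\<^sub>R v)"
    using assms span_finite[of "a ` {1..m}"] by (auto simp: scalar_mult_eq_scaleR)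
  also have "\<dots> = (\<Sum>j\<in>{1..m}. u (a j) *\<^sub>R a j)"
    by (rule sum.reindex[OF A_inj, unfolded comp_def])
  finally show ?thesis by (rule that)
qed

lemma lincomb_coord:
  assumes "x \<in> V"
  shows "(\<Sum>j\<in>{1..m}. coord a m x j *\<^sub>R a j) = x"
proof -
  obtain c where x: "x = (\<Sum>j\<in>{1..m}. c j *\<^sub>R a j)"
    using span_eq_lincomb assms by blast
  show ?thesis unfolding x by (rule sum.cong) (simp_all add: coord_lincomb)
qed

lemma coord_add:
  assumes "x \<in> V" "y \<in> V" "r \<in> {1..m}"
  shows "coord a m (x + y) r = coord a m x r + coord a m y r"
proof -
  obtain c d where "x = (\<Sum>j\<in>{1..m}. c j *\<^sub>R a j)" and "y = (\<Sum>j\<in>{1..m}. d j *\<^sub>R a j)"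
    using span_eq_lincomb assms by metis
  moreover from this have "x + y = (\<Sum>j\<in>{1..m}. (c j + d j) *\<^sub>R a j)"
    by (simp add: scaleR_add_left sum.distrib)
  ultimately show ?thesis using assms(3) by (simp add: coord_lincomb)
qed

lemma coord_diff:
  assumes "x \<in> V" "y \<in> V" "r \<in> {1..m}"
  shows "coord a m (x - y) r = coord a m x r - coord a m y r"
proof -
  obtain c d where "x = (\<Sum>j\<in>{1..m}. c j *\<^sub>R a j)" and "y = (\<Sum>j\<in>{1..m}. d j *\<^sub>R a j)"
    using span_eq_lincomb assms by metis
  moreover from this have "x - y = (\<Sum>j\<in>{1..m}. (c j - d j) *\<^sub>R a j)"
    by (simp add: scaleR_diff_left sum_subtractf)
  ultimately show ?thesis using assms(3) by (simp add: coord_lincomb)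
qed

lemma coord_scaleR:
  assumes "x \<in> V" "r \<in> {1..m}"
  shows "coord a m (t *\<^sub>R x) r = t * coord a m x r"
proof -
  obtain c where "x = (\<Sum>j\<in>{1..m}. c j *\<^sub>R a j)"
    using span_eq_lincomb assms by metis
  moreover from this have "t *\<^sub>R x = (\<Sum>j\<in>{1..m}. (t * c j) *\<^sub>R a j)"
    by (simp add: scaleR_sum_right)
  ultimately show ?thesis using assms(2) by (simp add: coord_lincomb)
qed

lemma eq_if_coord_eq:
  assumes "x \<in> V" "y \<in> V" "\<And>r. r \<in> {1..m} \<Longrightarrow> coord a m x r = coord a m y r"
  shows "x = y"
proof -
  have "(\<Sum>j\<in>{1..m}. coord a m x j *\<^sub>R a j) = (\<Sum>j\<in>{1..m}. coord a m y j *\<^sub>R a j)"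
    by (rule sum.cong) (simp_all add: assms(3))
  then show ?thesis using lincomb_coord assms(1,2) by simp
qed

lemma ZA_iff: "x \<in> ZA a m \<longleftrightarrow> x \<in> V \<and> (\<forall>r\<in>{1..m}. coord a m x r \<in> \<int>)"
proof
  assume "x \<in> ZA a m"
  then obtain c where "x = (\<Sum>j\<in>{1..m}. of_int (c j) *\<^sub>R a j)" by (auto simp: ZA_def)
  then show "x \<in> V \<and> (\<forall>r\<in>{1..m}. coord a m x r \<in> \<int>)"
    by (simp add: lincomb_in_span coord_lincomb)
next
  assume x: "x \<in> V \<and> (\<forall>r\<in>{1..m}. coord a m x r \<in> \<int>)"
  have "(\<Sum>j\<in>{1..m}. of_int \<lfloor>coord a m x j\<rfloor> *\<^sub>R a j) = (\<Sum>j\<in>{1..m}. coord a m x j *\<^sub>R a j)"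
    by (rule sum.cong) (use x in auto)
  then show "x \<in> ZA a m"
    using lincomb_coord x unfolding ZA_def by (intro CollectI exI[of _ "\<lambda>j. \<lfloor>coord a m x j\<rfloor>"]) simp
qed

lemma ZA_add: "x \<in> ZA a m \<Longrightarrow> y \<in> ZA a m \<Longrightarrow> x + y \<in> ZA a m"
  by (simp add: ZA_iff coord_add span_add)

lemma ZA_diff: "x \<in> ZA a m \<Longrightarrow> y \<in> ZA a m \<Longrightarrow> x - y \<in> ZA a m"
  by (simp add: ZA_iff coord_diff span_diff)

lemma ZA_scaleR_of_int: "x \<in> ZA a m \<Longrightarrow> of_int k *\<^sub>R x \<in> ZA a m"
  by (simp add: ZA_iff coord_scaleR span_scale)

lemma Bset_iff:
  "x \<in> Bset a m \<longleftrightarrow> x \<in> V \<and> intvec x \<and> (\<forall>r\<in>{1..m}. 0 \<le> coord a m x r \<and> coord a m x r < 1)"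
proof
  assume "x \<in> Bset a m"
  then obtain c where "x \<in> VZ a m" "\<forall>j\<in>{1..m}. 0 \<le> c j \<and> c j < 1" "x = (\<Sum>j\<in>{1..m}. c j *\<^sub>R a j)"
    by (auto simp: Bset_def)
  then show "x \<in> V \<and> intvec x \<and> (\<forall>r\<in>{1..m}. 0 \<le> coord a m x r \<and> coord a m x r < 1)"
    by (simp add: VZ_def coord_lincomb)
next
  assume "x \<in> V \<and> intvec x \<and> (\<forall>r\<in>{1..m}. 0 \<le> coord a m x r \<and> coord a m x r < 1)"
  then show "x \<in> Bset a m"
    unfolding Bset_def VZ_def using lincomb_coord[of x] by (intro CollectI conjI exI[of _ "coord a m x"]) auto
qed

end

locale circuit = indep_family +
  fixes l :: "nat \<Rightarrow> nat"
  assumes l_pos: "\<forall>j\<in>{0..m}. l j > 0"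
    and l_gcd: "Gcd (l ` {0..m}) = 1"
    and rel: "real (l 0) *\<^sub>R a 0 = (\<Sum>j\<in>{1..m}. real (l j) *\<^sub>R a j)"
    and l0_sum: "l 0 = (\<Sum>j\<in>{1..m}. l j)"
begin

lemma l0_pos: "0 < l 0"
  using l_pos by auto

lemma a0_eq_lincomb: "a 0 = (\<Sum>j\<in>{1..m}. (real (l j) / real (l 0)) *\<^sub>R a j)"
proof -
  have "a 0 = (1 / real (l 0)) *\<^sub>R (real (l 0) *\<^sub>R a 0)" using l0_pos by simp
  then show ?thesis unfolding rel by (simp add: scaleR_sum_right)
qed

lemma a0_in_span: "a 0 \<in> V"
  by (subst a0_eq_lincomb) (rule lincomb_in_span)

lemma coord_a0: "r \<in> {1..m} \<Longrightarrow> coord a m (a 0) r = real (l r) / real (l 0)"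
  by (subst a0_eq_lincomb) (rule coord_lincomb)

lemma l0_dvd_if_multiple_a0_in_ZA:
  assumes "of_int k *\<^sub>R a 0 \<in> ZA a m"
  shows "int (l 0) dvd k"
proof -
  define d where "d = nat \<bar>k\<bar>"
  have "l 0 dvd d * l j" if j: "j \<in> {0..m}" for j
  proof (cases "j = 0")
    case False
    with j have "of_int k * (real (l j) / real (l 0)) \<in> \<int>"
      using assms by (simp add: ZA_iff coord_scaleR a0_in_span coord_a0)
    then obtain q where "of_int k * (real (l j) / real (l 0)) = of_int q"
      by (elim Ints_cases)
    then have "of_int (k * int (l j)) = (of_int (q * int (l 0)) :: real)"
      using l0_pos by (simp add: field_simps)
    then have "int (l 0) dvd k * int (l j)"
      by (simp only: of_int_eq_iff) simp
    then have "int (l 0) dvd \<bar>k * int (l j)\<bar>"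
      by (simp only: dvd_abs_iff)
    then show ?thesis
      by (simp add: d_def abs_mult flip: int_dvd_int_iff)
  qed simp
  then have "l 0 dvd Gcd ((*) d ` l ` {0..m})"
    by (intro Gcd_greatest) auto
  also have "Gcd ((*) d ` l ` {0..m}) = d"
    using l_gcd by (simp add: Gcd_mult)
  finally show ?thesis by (simp add: d_def flip: int_dvd_int_iff)
qed

lemma ZAplus_iff: "z \<in> ZAplus a m \<longleftrightarrow> (\<exists>k. z - of_int k *\<^sub>R a 0 \<in> ZA a m)"
proof
  assume "z \<in> ZAplus a m"
  then obtain c where "z = (\<Sum>j\<in>{0..m}. of_int (c j) *\<^sub>R a j)"
    by (auto simp: ZAplus_def)
  then have "z - of_int (c 0) *\<^sub>R a 0 = (\<Sum>j\<in>{1..m}. of_int (c j) *\<^sub>R a j)"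
    by (simp add: sum.atLeast_Suc_atMost flip: One_nat_def)
  then show "\<exists>k. z - of_int k *\<^sub>R a 0 \<in> ZA a m"
    by (auto simp: ZA_def)
next
  assume "\<exists>k. z - of_int k *\<^sub>R a 0 \<in> ZA a m"
  then obtain k c where "z - of_int k *\<^sub>R a 0 = (\<Sum>j\<in>{1..m}. of_int (c j) *\<^sub>R a j)"
    by (auto simp: ZA_def)
  moreover have "(\<Sum>j\<in>{1..m}. of_int ((c(0 := k)) j) *\<^sub>R a j) = (\<Sum>j\<in>{1..m}. of_int (c j) *\<^sub>R a j)"
    by (rule sum.cong) auto
  ultimately have "z = (\<Sum>j\<in>{0..m}. of_int ((c(0 := k)) j) *\<^sub>R a j)"
    by (simp add: sum.atLeast_Suc_atMost algebra_simps flip: One_nat_def)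
  then show "z \<in> ZAplus a m"
    by (auto simp: ZAplus_def)
qed

lemma ZAplus_add:
  assumes "x \<in> ZAplus a m" "y \<in> ZAplus a m"
  shows "x + y \<in> ZAplus a m"
proof -
  obtain k k' where "x - of_int k *\<^sub>R a 0 \<in> ZA a m" "y - of_int k' *\<^sub>R a 0 \<in> ZA a m"
    using assms ZAplus_iff by blast
  then have "(x - of_int k *\<^sub>R a 0) + (y - of_int k' *\<^sub>R a 0) \<in> ZA a m"
    by (rule ZA_add)
  then have "x + y - of_int (k + k') *\<^sub>R a 0 \<in> ZA a m"
    by (simp add: algebra_simps scaleR_add_left)
  then show ?thesis using ZAplus_iff by blast
qed

lemma ZAplus_diff:
  assumes "x \<in> ZAplus a m" "y \<in> ZAplus a m"
  shows "x - y \<in> ZAplus a m"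
proof -
  obtain k k' where "x - of_int k *\<^sub>R a 0 \<in> ZA a m" "y - of_int k' *\<^sub>R a 0 \<in> ZA a m"
    using assms ZAplus_iff by blast
  then have "(x - of_int k *\<^sub>R a 0) - (y - of_int k' *\<^sub>R a 0) \<in> ZA a m"
    by (rule ZA_diff)
  then have "x - y - of_int (k - k') *\<^sub>R a 0 \<in> ZA a m"
    by (simp add: algebra_simps scaleR_diff_left)
  then show ?thesis using ZAplus_iff by blast
qed

text \<open>Since l_0 a_0 \<in> ZA, and by l0_dvd_if_multiple_a0_in_ZA no smaller multiple is,
  the class of a_0 in ZAplus / ZA has order exactly l_0.\<close>

lemma shift_into_ZA_exists:
  assumes "z \<in> ZAplus a m"
  obtains s where "s < l 0" and "z + real s *\<^sub>R a 0 \<in> ZA a m"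
proof -
  obtain k where k: "z - of_int k *\<^sub>R a 0 \<in> ZA a m"
    using assms ZAplus_iff by blast
  define s where "s = nat ((- k) mod int (l 0))"
  have s: "s < l 0" "int s = (- k) mod int (l 0)"
    using l0_pos by (auto simp: s_def nat_less_iff)
  have "(k + int s) mod int (l 0) = 0"
    unfolding s(2) by (simp add: mod_add_right_eq)
  then obtain q where q: "k + int s = q * int (l 0)"
    by (metis mult.commute mod_eq_0_iff_dvd dvdE)
  have "real (l 0) *\<^sub>R a 0 \<in> ZA a m"
    unfolding rel ZA_def by (auto intro!: exI[of _ "\<lambda>j. int (l j)"])
  then have "of_int q *\<^sub>R (real (l 0) *\<^sub>R a 0) \<in> ZA a m"
    by (rule ZA_scaleR_of_int)
  then have "(z - of_int k *\<^sub>R a 0) + of_int q *\<^sub>R (real (l 0) *\<^sub>R a 0) \<in> ZA a m"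
    using k by (rule ZA_add[rotated])
  also have "(z - of_int k *\<^sub>R a 0) + of_int q *\<^sub>R (real (l 0) *\<^sub>R a 0) = z + real s *\<^sub>R a 0"
    using arg_cong[OF q, of "\<lambda>i. of_int i *\<^sub>R a 0"] by (simp add: algebra_simps scaleR_add_left)
  finally show ?thesis using s that by blast
qed

lemma shift_into_ZA_unique:
  assumes "s < l 0" "s' < l 0" "z + real s *\<^sub>R a 0 \<in> ZA a m" "z + real s' *\<^sub>R a 0 \<in> ZA a m"
  shows "s = s'"
proof -
  have "(z + real s *\<^sub>R a 0) - (z + real s' *\<^sub>R a 0) \<in> ZA a m"
    using assms(3,4) by (rule ZA_diff)
  then have "of_int (int s - int s') *\<^sub>R a 0 \<in> ZA a m"
    by (simp add: scaleR_diff_left)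
  then have "int (l 0) dvd int s - int s'"
    by (rule l0_dvd_if_multiple_a0_in_ZA)
  then show ?thesis
    using assms(1,2) dvd_imp_le_int[of "int s - int s'" "int (l 0)"] by linarith
qed

definition fractions :: "real set" where
  "fractions = (\<lambda>k. real k / real (l 0)) ` {1..l 0}"

lemma card_fractions: "card fractions = l 0"
proof -
  have "inj_on (\<lambda>k. real k / real (l 0)) {1..l 0}"
    using l0_pos by (auto simp: inj_on_def)
  then show ?thesis by (simp add: fractions_def card_image)
qed

lemma fractions_pos: "\<beta> \<in> fractions \<Longrightarrow> 0 < \<beta>"
  by (auto simp: fractions_def)

end

locale coset_base = circuit +
  fixes C and bi
  assumes A_int: "\<forall>j\<in>{0..m}. intvec (a j)"
    and coset: "\<exists>x\<in>VZ a m. C = (\<lambda>z. x + z) ` ZAplus a m"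
    and bi_in: "bi \<in> Bset a m \<inter> C"
begin

definition Bk where
  "Bk = Bset a m \<inter> C"

abbreviation S0 where
  "S0 \<equiv> s0 a m l bi"

lemma ZAplus_intvec: "z \<in> ZAplus a m \<Longrightarrow> intvec z"
  using A_int by (auto simp: ZAplus_def intro!: intvec_sum intvec_scaleR_of_int)

lemma coset_diff: "x \<in> C \<Longrightarrow> y \<in> C \<Longrightarrow> x - y \<in> ZAplus a m"
  using coset ZAplus_diff by fastforce

lemma coset_add: "x \<in> C \<Longrightarrow> z \<in> ZAplus a m \<Longrightarrow> x + z \<in> C"
  using coset ZAplus_add by (fastforce simp: add.assoc)

lemma Bk_in_span: "b \<in> Bk \<Longrightarrow> b \<in> V"
  by (simp add: Bk_def Bset_iff)

lemma Bk_coord: "b \<in> Bk \<Longrightarrow> r \<in> {1..m} \<Longrightarrow> 0 \<le> coord a m b r \<and> coord a m b r < 1"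
  by (simp add: Bk_def Bset_iff)

lemma bi_in_Bk: "bi \<in> Bk"
  using bi_in by (simp add: Bk_def)

lemma s0_eqI:
  assumes "s < l 0" "bi + real s *\<^sub>R a 0 - b \<in> ZA a m"
  shows "S0 b = s"
  unfolding s0_def
proof (rule the_equality)
  fix s' assume "s' < l 0 \<and> bi + real s' *\<^sub>R a 0 - b \<in> ZA a m"
  then show "s' = s"
    using assms shift_into_ZA_unique[of s' s "bi - b"] by (simp add: algebra_simps)
qed (use assms in simp)

lemma s0_shift:
  assumes "b \<in> Bk"
  shows "S0 b < l 0" "bi + real (S0 b) *\<^sub>R a 0 - b \<in> ZA a m"
proof -
  have "bi - b \<in> ZAplus a m"
    using assms bi_in_Bk by (auto simp: Bk_def intro: coset_diff)
  then obtain s where "s < l 0" "bi + real s *\<^sub>R a 0 - b \<in> ZA a m"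
    by (rule shift_into_ZA_exists) (simp add: algebra_simps)
  with s0_eqI show "S0 b < l 0" "bi + real (S0 b) *\<^sub>R a 0 - b \<in> ZA a m"
    by simp_all
qed

lemma s0_bi: "S0 bi = 0"
  using l0_pos by (intro s0_eqI) (auto simp: ZA_def intro: exI[of _ "\<lambda>_. 0"])

lemma s0_inj: "inj_on S0 Bk"
proof
  fix b b' assume b: "b \<in> Bk" and b': "b' \<in> Bk" and eq: "S0 b = S0 b'"
  have "b - b' = (bi + real (S0 b') *\<^sub>R a 0 - b') - (bi + real (S0 b) *\<^sub>R a 0 - b)"
    using eq by simp
  then have "b - b' \<in> ZA a m"
    using ZA_diff[OF s0_shift(2)[OF b'] s0_shift(2)[OF b]] by metis
  then have diff_int: "coord a m (b - b') r \<in> \<int>" if "r \<in> {1..m}" for r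
    using that by (simp add: ZA_iff)
  show "b = b'"
  proof (rule eq_if_coord_eq)
    fix r assume r: "r \<in> {1..m}"
    have "coord a m b r - coord a m b' r \<in> \<int>"
      using diff_int[OF r] coord_diff[OF Bk_in_span[OF b] Bk_in_span[OF b'] r] by simp
    moreover have "\<bar>coord a m b r - coord a m b' r\<bar> < 1"
      using Bk_coord[OF b r] Bk_coord[OF b' r] by linarith
    ultimately show "coord a m b r = coord a m b' r"
      using Ints_nonzero_abs_less1 by fastforce
  qed (use b b' Bk_in_span in auto)
qed

text \<open>The preimage of s is b_i + s a_0 with its coordinates reduced modulo 1.\<close>

lemma s0_surj:
  assumes s: "s < l 0"
  shows "\<exists>b\<in>Bk. S0 b = s"
proof -
  define y where "y = bi + real s *\<^sub>R a 0"
  define w where "w = (\<Sum>j\<in>{1..m}. of_int \<lfloor>coord a m y j\<rfloor> *\<^sub>R a j)"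
  define b where "b = y - w"
  have y: "y \<in> V"
    unfolding y_def using bi_in_Bk Bk_in_span a0_in_span by (intro span_add span_scale) auto
  have w: "w \<in> ZA a m"
    by (auto simp: w_def ZA_def)
  have b_lincomb: "b = (\<Sum>j\<in>{1..m}. frac (coord a m y j) *\<^sub>R a j)"
    using lincomb_coord[OF y]
    by (simp add: b_def w_def frac_def scaleR_diff_left sum_subtractf)
  have a0_shift: "real s *\<^sub>R a 0 - w \<in> ZAplus a m"
    using w ZA_scaleR_of_int[OF w, of "-1"] by (auto simp: ZAplus_iff intro: exI[of _ "int s"])
  have "b = bi + (real s *\<^sub>R a 0 - w)"
    by (simp add: b_def y_def)
  then have "b \<in> C" "intvec b"
    using bi_in a0_shift by (auto intro: coset_add intvec_add ZAplus_intvec simp: Bset_iff)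
  moreover have "b \<in> V" "\<forall>r\<in>{1..m}. 0 \<le> coord a m b r \<and> coord a m b r < 1"
    by (simp_all add: b_lincomb lincomb_in_span coord_lincomb frac_lt_1)
  ultimately have "b \<in> Bk"
    by (simp add: Bk_def Bset_iff)
  moreover have "S0 b = s"
    using s w by (intro s0_eqI) (simp_all add: b_def y_def)
  ultimately show ?thesis by blast
qed

lemma s0_bij: "bij_betw S0 Bk {..<l 0}"
  unfolding bij_betw_def using s0_inj s0_shift(1) s0_surj by fastforce

lemma finite_Bk: "finite Bk"
  using bij_betw_finite[OF s0_bij] by simp

lemma card_Bk: "card Bk = l 0"
  using bij_betw_same_card[OF s0_bij] by simp

definition alist :: "real multiset" where
  "alist = (\<Sum>r\<in>{1..m}. image_mset (\<lambda>\<sigma>. (coord a m bi r + real \<sigma>) / real (l r)) (mset [0..<l r]))"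

definition expo where
  "expo b = real (S0 b) / real (l 0)"

text \<open>Hser b is the series H_b of the statement: F^(b)(\<lambda>) = \<lambda>^(s0 b) Hser b (\<lambda>^l_0),
  and the solution of the operator is x^(expo b) Hser b (x).\<close>

definition Hser where
  "Hser b = Abs_fps (\<lambda>s. complex_of_real (Fc a m l bi b s))"

lemma size_alist: "size alist = l 0"
  by (simp add: alist_def size_multiset_sum l0_sum)

lemma coord_sub_sr:
  assumes b: "b \<in> Bk" and r: "r \<in> {1..m}"
  shows "coord a m b r - sr a m l bi b r = coord a m bi r + real (S0 b) * real (l r) / real (l 0)"
proof -
  have "b - bi \<in> V" "real (S0 b) *\<^sub>R a 0 \<in> V"
    using b bi_in_Bk Bk_in_span a0_in_span by (auto intro: span_diff span_scale)
  then show ?thesis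
    using b bi_in_Bk r
    by (simp add: sr_def coord_diff coord_scaleR coord_a0 Bk_in_span a0_in_span)
qed

lemma Fc_eq_pochhammer_ratio:
  assumes b: "b \<in> Bk"
  shows "Fc a m l bi b s = (\<Prod>\<alpha>\<in>#alist. pochhammer (expo b + \<alpha>) s)
                           / (\<Prod>\<beta>\<in>#mset_set fractions. pochhammer (expo b + \<beta>) s)"
proof -
  have upper: "(coord a m b r - sr a m l bi b r + real \<sigma>) / real (l r)
             = expo b + (coord a m bi r + real \<sigma>) / real (l r)" if r: "r \<in> {1..m}" for r \<sigma>
  proof -
    have "0 < l r" using l_pos r by auto
    then show ?thesis
      unfolding coord_sub_sr[OF b r] expo_def using l0_pos by (simp add: field_simps)
  qed
  have lower: "(real (S0 b) + real t) / real (l 0) = expo b + real t / real (l 0)" for t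
    by (simp add: expo_def add_divide_distrib)
  have "(\<Prod>r\<in>{1..m}. \<Prod>\<sigma><l r. pochhammer ((coord a m b r - sr a m l bi b r + real \<sigma>) / real (l r)) s)
      = (\<Prod>r\<in>{1..m}. \<Prod>\<sigma><l r. pochhammer (expo b + (coord a m bi r + real \<sigma>) / real (l r)) s)"
    by (intro prod.cong refl) (simp add: upper)
  also have "\<dots> = (\<Prod>\<alpha>\<in>#alist. pochhammer (expo b + \<alpha>) s)"
    unfolding alist_def prod_mset_image_sum[OF finite_atLeastAtMost]
    by (simp add: image_mset.compositionality comp_def atLeast0LessThan flip: prod_unfold_prod_mset)
  finally have num: "(\<Prod>r\<in>{1..m}. \<Prod>\<sigma><l r. pochhammer ((coord a m b r - sr a m l bi b r + real \<sigma>) / real (l r)) s)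
      = (\<Prod>\<alpha>\<in>#alist. pochhammer (expo b + \<alpha>) s)" .
  have "(\<Prod>\<beta>\<in>#mset_set fractions. pochhammer (expo b + \<beta>) s) = (\<Prod>\<beta>\<in>fractions. pochhammer (expo b + \<beta>) s)"
    by (simp add: prod_unfold_prod_mset)
  also have "\<dots> = (\<Prod>t\<in>{1..l 0}. pochhammer (expo b + real t / real (l 0)) s)"
    using l0_pos unfolding fractions_def by (subst prod.reindex) (auto simp: inj_on_def)
  finally have den: "(\<Prod>t\<in>{1..l 0}. pochhammer ((real (S0 b) + real t) / real (l 0)) s)
      = (\<Prod>\<beta>\<in>#mset_set fractions. pochhammer (expo b + \<beta>) s)"
    by (simp add: lower)
  show ?thesis
    unfolding Fc_def num den ..
qed

lemma Fc_0: "Fc a m l bi b 0 = 1"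
  by (simp add: Fc_def)

lemma fps_nth_Fser:
  "fps_nth (Fser a m l bi b) n =
     (if S0 b \<le> n \<and> l 0 dvd (n - S0 b) then fps_nth (Hser b) ((n - S0 b) div l 0) else 0)"
  by (simp add: Fser_def Hser_def Let_def)

lemma expo_diff_not_Nats:
  assumes b: "b \<in> Bk" and b': "b' \<in> Bk" and "b \<noteq> b'"
  shows "expo b - expo b' \<notin> \<nat>"
proof
  assume "expo b - expo b' \<in> \<nat>"
  then have "expo b - expo b' \<in> \<int>"
    using Nats_subset_Ints by blast
  moreover have "\<bar>expo b - expo b'\<bar> < 1"
  proof -
    have "\<bar>real (S0 b) - real (S0 b')\<bar> < real (l 0)"
      using s0_shift(1)[OF b] s0_shift(1)[OF b'] by linarith
    moreover have "\<bar>expo b - expo b'\<bar> = \<bar>real (S0 b) - real (S0 b')\<bar> / real (l 0)"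
      by (simp add: expo_def abs_divide flip: diff_divide_distrib)
    ultimately show ?thesis
      using l0_pos by (simp add: divide_less_eq)
  qed
  ultimately have "expo b = expo b'"
    using Ints_nonzero_abs_less1 by force
  then have "S0 b = S0 b'"
    using l0_pos by (simp add: expo_def)
  then show False
    using assms inj_onD[OF s0_inj] by blast
qed

end

locale boundary_base = coset_base +
  assumes bi_bdry: "\<not> interior_pt a m bi"
begin

definition interiors where
  "interiors = {b \<in> Bk. interior_pt a m b}"

definition boundaries where
  "boundaries = {b \<in> Bk. \<not> interior_pt a m b}"

definition Eset :: "real set" where
  "Eset = (\<lambda>b. 1 - expo b) ` (boundaries - {bi})"

definition betaset :: "real set" where
  "betaset = fractions - Eset"

definition Jset where
  "Jset = {b \<in> Bk. interior_pt a m b \<or> b = bi}"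

lemma one_minus_expo_in_fractions:
  assumes "b \<in> Bk"
  shows "1 - expo b \<in> fractions"
proof -
  have "1 - expo b = real (l 0 - S0 b) / real (l 0)" "l 0 - S0 b \<in> {1..l 0}"
    using s0_shift(1)[OF assms] l0_pos by (auto simp: expo_def of_nat_diff field_simps)
  then show ?thesis unfolding fractions_def by blast
qed

lemma inj_on_one_minus_expo: "inj_on (\<lambda>b. 1 - expo b) Bk"
  using s0_inj l0_pos by (auto simp: inj_on_def expo_def)

lemma Eset_subset_fractions: "Eset \<subseteq> fractions"
  using one_minus_expo_in_fractions by (auto simp: Eset_def boundaries_def)

lemma card_Eset: "card Eset = card boundaries - 1"
proof -
  have "inj_on (\<lambda>b. 1 - expo b) (boundaries - {bi})"
    using inj_on_one_minus_expo by (rule inj_on_subset) (auto simp: boundaries_def)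
  then show ?thesis
    using bi_in_Bk bi_bdry finite_Bk by (simp add: Eset_def card_image boundaries_def)
qed

lemma card_betaset: "card betaset = card interiors + 1"
proof -
  have "Bk = interiors \<union> boundaries" "interiors \<inter> boundaries = {}"
    by (auto simp: interiors_def boundaries_def)
  then have "card interiors + card boundaries = card Bk"
    using finite_Bk by (simp add: card_Un_disjoint)
  moreover have "0 < card boundaries"
    using bi_in_Bk bi_bdry finite_Bk by (auto simp: boundaries_def card_gt_0_iff)
  moreover have "finite Eset"
    using Eset_subset_fractions finite_subset by (auto simp: fractions_def)
  ultimately show ?thesis
    using Eset_subset_fractions card_Eset card_fractions card_Bk
    by (simp add: betaset_def card_Diff_subset)
qed

text \<open>A boundary point b \<noteq> b_i has a coordinate r with v_r = 0,
  and then v_r(b_i) + s0 b l_r / l_0 is an integer k \<in> {1..l_r}, so that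
  1 - expo b is the entry \<sigma> = l_r - k of alist.\<close>

lemma Eset_mem_alist:
  assumes "x \<in> Eset"
  shows "x \<in># alist"
proof -
  obtain b where b: "b \<in> Bk" "b \<noteq> bi" "\<not> interior_pt a m b" and x: "x = 1 - expo b"
    using assms by (auto simp: Eset_def boundaries_def)
  obtain r where r: "r \<in> {1..m}" "coord a m b r = 0"
    using b(3) Bk_coord[OF b(1)] by (force simp: interior_pt_def not_less)
  have lr: "0 < l r" using l_pos r by auto
  have s: "0 < S0 b" "S0 b < l 0"
    using s0_shift(1)[OF b(1)] inj_onD[OF s0_inj _ b(1) bi_in_Bk] s0_bi b(2) by auto
  have "coord a m (bi + real (S0 b) *\<^sub>R a 0 - b) r \<in> \<int>"
    using s0_shift(2)[OF b(1)] r(1) by (simp add: ZA_iff)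
  then have "coord a m bi r + real (S0 b) * real (l r) / real (l 0) \<in> \<int>"
    using r b(1) bi_in_Bk Bk_in_span a0_in_span
    by (simp add: coord_diff coord_add coord_scaleR coord_a0 span_add span_scale)
  then obtain k where k: "coord a m bi r + real (S0 b) * real (l r) / real (l 0) = of_int k"
    by (elim Ints_cases)
  have "0 < real (S0 b) * real (l r) / real (l 0)" "real (S0 b) * real (l r) / real (l 0) < real (l r)"
    using s lr l0_pos by (auto simp: field_simps)
  then have "0 < real_of_int k" "real_of_int k < real_of_int (int (l r) + 1)"
    using k Bk_coord[OF bi_in_Bk r(1)] by simp_all
  then have "1 \<le> k" "k \<le> int (l r)"
    by simp_all
  then have "nat (int (l r) - k) < l r" "(coord a m bi r + real (nat (int (l r) - k))) / real (l r) = x"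
    using k lr l0_pos by (auto simp: x expo_def of_nat_diff field_simps)
  then show ?thesis
    unfolding alist_def using r(1) by (intro mem_sum_mset_setI) force+
qed

lemma mset_Eset_subset_alist: "mset_set Eset \<subseteq># alist"
  using Eset_mem_alist by (auto simp: subseteq_mset_def count_mset_set' Suc_le_eq)

lemma size_alphas: "size (alist - mset_set Eset) = card interiors + 1"
  using card_betaset card_fractions Eset_subset_fractions mset_Eset_subset_alist size_alist
  by (simp add: size_Diff_submset betaset_def card_Diff_subset finite_subset fractions_def)

lemma card_Jset: "card Jset = card interiors + 1"
proof -
  have "Jset = insert bi interiors" "bi \<notin> interiors"
    using bi_in_Bk bi_bdry by (auto simp: Jset_def interiors_def)
  then show ?thesis using finite_Bk by (simp add: interiors_def)
qed

lemma one_minus_expo_in_betaset: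
  assumes "b \<in> Jset"
  shows "1 - expo b \<in> betaset"
proof -
  have "b \<in> Bk" using assms by (simp add: Jset_def)
  moreover have "1 - expo b \<notin> Eset"
    using assms inj_onD[OF inj_on_one_minus_expo]
    by (fastforce simp: Eset_def boundaries_def Jset_def)
  ultimately show ?thesis
    by (simp add: betaset_def one_minus_expo_in_fractions)
qed

lemma Hser_solution:
  assumes "b \<in> Jset"
  shows "hyp_solution (mset_set betaset) (alist - mset_set Eset) (expo b) (Hser b)"
  unfolding Hser_def
proof (rule hyp_solution_of_recurrence)
  have b: "b \<in> Bk" using assms by (simp add: Jset_def)
  show "1 - expo b \<in># mset_set betaset"
    using one_minus_expo_in_betaset[OF assms] by (simp add: betaset_def fractions_def)
  have "mset_set betaset = mset_set fractions - mset_set Eset"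
    using Eset_subset_fractions by (simp add: betaset_def mset_set_Diff fractions_def)
  moreover have "mset_set Eset \<subseteq># mset_set fractions"
    using Eset_subset_fractions by (simp add: fractions_def subset_imp_msubset_mset_set)
  moreover have "0 < expo b + \<beta>" if "\<beta> \<in># mset_set fractions" for \<beta>
    using that fractions_pos by (simp add: expo_def fractions_def add_nonneg_pos)
  ultimately show "(\<Prod>\<beta>\<in>#mset_set betaset. expo b + real s + \<beta>) * Fc a m l bi b (Suc s)
                 = (\<Prod>\<alpha>\<in>#alist - mset_set Eset. expo b + real s + \<alpha>) * Fc a m l bi b s" for s
    using pochhammer_ratio_Suc[OF mset_Eset_subset_alist] by (simp add: Fc_eq_pochhammer_ratio[OF b])
qed

lemma full_solution_set_Hser:
  "full_solution_set (mset_set betaset) (alist - mset_set Eset) Jset expo Hser"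
  unfolding full_solution_set_def
proof (intro conjI allI impI)
  show "finite Jset" using finite_Bk by (simp add: Jset_def)
  show "card Jset = size (mset_set betaset)" by (simp add: card_Jset card_betaset)
  show "\<forall>b\<in>Jset. hyp_solution (mset_set betaset) (alist - mset_set Eset) (expo b) (Hser b)"
    using Hser_solution by blast
  show "\<forall>b\<in>Jset. c b = 0" if "\<forall>t. (\<Sum>b\<in>Jset. c b * gser_coeff (expo b) (Hser b) t) = 0" for c
    using that finite_Bk expo_diff_not_Nats
    by (intro gser_coeff_independent) (auto simp: Jset_def Hser_def Fc_0)
qed

end

theorem theorem6p18:
  fixes a :: "nat \<Rightarrow> real^'n" and m :: nat and l :: "nat \<Rightarrow> nat"
    and C :: "(real^'n) set" and bi :: "real^'n"
  assumes A_int: "\<forall>j\<in>{0..m}. intvec (a j)"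
    and A_inj: "inj_on a {1..m}"
    and A_indep: "independent (a ` {1..m})"
    and l_pos: "\<forall>j\<in>{0..m}. l j > 0"
    and l_gcd: "Gcd (l ` {0..m}) = 1"
    and rel: "real (l 0) *\<^sub>R a 0 = (\<Sum>j\<in>{1..m}. real (l j) *\<^sub>R a j)"
    and l0_sum: "l 0 = (\<Sum>j\<in>{1..m}. l j)"
    and coset: "\<exists>x\<in>VZ a m. C = (\<lambda>z. x + z) ` ZAplus a m"
    and bi_in: "bi \<in> Bset a m \<inter> C"
    and bi_bdry: "\<not> interior_pt a m bi"
  shows
    "let Bk = Bset a m \<inter> C;
         Rk = card {b \<in> Bk. interior_pt a m b};
         E = {1 - real (s0 a m l bi b) / real (l 0) | b. b \<in> Bk \<and> \<not> interior_pt a m b \<and> b \<noteq> bi};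
         betas = mset_set {\<beta>. \<exists>k\<in>{1..l 0}. \<beta> = real k / real (l 0) \<and> \<beta> \<notin> E};
         alist = (\<Sum>r\<in>{1..m}. image_mset (\<lambda>\<sigma>. (coord a m bi r + real \<sigma>) / real (l r)) (mset [0..<l r]));
         alphas = alist - mset_set E;
         J = {b \<in> Bk. interior_pt a m b \<or> b = bi}
     in size betas = Rk + 1 \<and> mset_set E \<subseteq># alist \<and> size alphas = Rk + 1 \<and>
        (\<exists>g :: real^'n \<Rightarrow> complex fps.
           full_solution_set betas alphas J (\<lambda>b. real (s0 a m l bi b) / real (l 0)) g \<and>
           (\<forall>b\<in>J. \<forall>n. fps_nth (Fser a m l bi b) n =
               (if s0 a m l bi b \<le> n \<and> l 0 dvd (n - s0 a m l bi b)
                then fps_nth (g b) ((n - s0 a m l bi b) div l 0) else 0)))"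
proof -
  interpret boundary_base a m l C bi
    using assms by unfold_locales auto
  have "{1 - real (s0 a m l bi b) / real (l 0) | b. b \<in> Bk \<and> \<not> interior_pt a m b \<and> b \<noteq> bi} = Eset"
    by (auto simp: Eset_def boundaries_def expo_def)
  moreover have "{\<beta>. \<exists>k\<in>{1..l 0}. \<beta> = real k / real (l 0) \<and> \<beta> \<notin> Eset} = betaset"
    by (auto simp: betaset_def fractions_def)
  moreover have "(\<lambda>b. real (s0 a m l bi b) / real (l 0)) = expo"
    by (simp add: fun_eq_iff expo_def)
  ultimately show ?thesis
    using card_betaset mset_Eset_subset_alist size_alphas full_solution_set_Hser fps_nth_Fser
    unfolding Let_def Bk_def[symmetric] interiors_def[symmetric] alist_def[symmetric]
      Jset_def[symmetric] by auto
qed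

end
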